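(* Let $V=\{(x_1,x_2,y_1,y_2)\in\mathbb{R}^4: X\neq0,\ Y\neq 0\}$. For every choice of polynomials $P_1,\dots,P_4\in\mathbb{Q}[x_1,x_2,y_1,y_2]$ and every variable $\xi\in\{x_1,x_2,y_1,y_2\}$ there exist polynomials $Q_1,\dots,Q_4\in\mathbb{Q}[x_1,x_2,y_1,y_2]$ such that $\frac{\partial}{\partial\xi}H_{Q_1,\dots,Q_4}=H_{P_1,\dots,P_4}$ on $V$.
   Context: For $(x_1,x_2,y_1,y_2)\in\mathbb{R}^4$ set $X=x_1-y_1$ and $Y=x_2-y_2$. For polynomials $P_1,\dots,P_4$ define on $V$ $$H_{P_1,\dots,P_4}=P_1\ln(X^2+Y^2)+P_2\arctan\!\Big(\frac XY\Big)+P_3\arctan\!\Big(\frac YX\Big)+P_4.$$ *)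

theory Defs
  imports "HOL-Analysis.Analysis"
begin

text \<open>A polynomial in
  Q[x1,x2,y1,y2] is represented by its coefficient function on exponent
  tuples (a,b,c,d) (monomial x1^a x2^b y1^c y2^d), required to have finite support.\<close>

type_synonym pt4 = "real \<times> real \<times> real \<times> real"
type_synonym qpoly4 = "nat \<times> nat \<times> nat \<times> nat \<Rightarrow> rat"

definition is_qpoly4 :: "qpoly4 \<Rightarrow> bool" where
  "is_qpoly4 c \<longleftrightarrow> finite {m. c m \<noteq> 0}"

definition peval4 :: "qpoly4 \<Rightarrow> pt4 \<Rightarrow> real" where
  "peval4 c p = (case p of (x1, x2, y1, y2) \<Rightarrow>
     (\<Sum>m\<in>{m. c m \<noteq> 0}. case m of (a, b, e, d) \<Rightarrow>
        real_of_rat (c m) * x1 ^ a * x2 ^ b * y1 ^ e * y2 ^ d))"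

definition bigX :: "pt4 \<Rightarrow> real" where
  "bigX p = (case p of (x1, x2, y1, y2) \<Rightarrow> x1 - y1)"

definition bigY :: "pt4 \<Rightarrow> real" where
  "bigY p = (case p of (x1, x2, y1, y2) \<Rightarrow> x2 - y2)"

definition setV :: "pt4 set" where
  "setV = {p. bigX p \<noteq> 0 \<and> bigY p \<noteq> 0}"

definition Hfun :: "qpoly4 \<Rightarrow> qpoly4 \<Rightarrow> qpoly4 \<Rightarrow> qpoly4 \<Rightarrow> pt4 \<Rightarrow> real" where
  "Hfun P1 P2 P3 P4 p =
     peval4 P1 p * ln ((bigX p)\<^sup>2 + (bigY p)\<^sup>2)
   + peval4 P2 p * arctan (bigX p / bigY p)
   + peval4 P3 p * arctan (bigY p / bigX p)
   + peval4 P4 p"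

definition coord :: "nat \<Rightarrow> pt4 \<Rightarrow> real" where
  "coord k p = (case p of (x1, x2, y1, y2) \<Rightarrow>
     (if k = 0 then x1 else if k = 1 then x2 else if k = 2 then y1 else y2))"

definition setc :: "nat \<Rightarrow> real \<Rightarrow> pt4 \<Rightarrow> pt4" where
  "setc k t p = (case p of (x1, x2, y1, y2) \<Rightarrow>
     (if k = 0 then (t, x2, y1, y2) else if k = 1 then (x1, t, y1, y2)
      else if k = 2 then (x1, x2, t, y2) else (x1, x2, y1, t)))"

end

theory Submission
  imports Defs
begin

(* Write the chosen coordinate as U + Z, where U is the one of X, Y, -X, -Y that contains it,
   Z is the coordinate paired with it, and W is the other difference; Z and W do not depend on
   the chosen coordinate and U^2 + W^2 = X^2 + Y^2.  Expanding monomials binomially in U + Z, it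
   suffices to integrate U^n F for F among ln (U^2 + W^2), arctan (U/W), arctan (W/U) and 1.
   Integrating by parts against U^(n+1) reduces this to the rational functions W U^m / (U^2 + W^2)
   and U^(m+1) / (U^2 + W^2): for m = 0 their primitives are arctan (U/W) and ln (U^2 + W^2) / 2,
   and U^(m+2) / (U^2 + W^2) = U^m - W (W U^m / (U^2 + W^2)) gives the induction step.  Only the
   rational constants 1/(n+1) and 1/2 are ever introduced, so the coefficients stay in Q. *)

definition monom4 :: "nat \<times> nat \<times> nat \<times> nat \<Rightarrow> pt4 \<Rightarrow> real" where
  "monom4 m p = (case m of (a, b, c, d) \<Rightarrow>
     coord 0 p ^ a * coord 1 p ^ b * coord 2 p ^ c * coord 3 p ^ d)"

lemma monom4_add: "monom4 (m + n) p = monom4 m p * monom4 n p"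
  by (cases m; cases n) (simp add: monom4_def power_add mult_ac)

lemma peval4_eq_sum_monom4:
  "peval4 c p = (\<Sum>m | c m \<noteq> 0. real_of_rat (c m) * monom4 m p)"
  by (cases p) (auto simp: peval4_def monom4_def coord_def intro!: sum.cong)

(* A finite family of monomials with rational coefficients; unlike is_qpoly4 no support
   condition is imposed, which makes closure under sums and products easy. *)
definition rpoly4 :: "(pt4 \<Rightarrow> real) \<Rightarrow> bool" where
  "rpoly4 f \<longleftrightarrow> (\<exists>S r. finite S \<and> f = (\<lambda>p. \<Sum>m\<in>S. real_of_rat (r m) * monom4 m p))"

lemma rpoly4_imp_peval4:
  assumes "rpoly4 f"
  obtains c where "is_qpoly4 c" "peval4 c = f"
proof -
  obtain S r where S: "finite S" and f: "f = (\<lambda>p. \<Sum>m\<in>S. real_of_rat (r m) * monom4 m p)"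
    using assms unfolding rpoly4_def by blast
  define c where "c m = (if m \<in> S then r m else 0)" for m
  have supp: "{m. c m \<noteq> 0} \<subseteq> S"
    by (auto simp: c_def)
  have "peval4 c p = f p" for p
  proof -
    have "peval4 c p = (\<Sum>m\<in>S. real_of_rat (c m) * monom4 m p)"
      unfolding peval4_eq_sum_monom4 by (rule sum.mono_neutral_left[OF S supp]) auto
    then show ?thesis
      by (simp add: f c_def)
  qed
  moreover have "is_qpoly4 c"
    using finite_subset[OF supp S] by (simp add: is_qpoly4_def)
  ultimately show ?thesis
    using that by blast
qed

lemma rpoly4_const: "c \<in> \<rat> \<Longrightarrow> rpoly4 (\<lambda>p. c)"
  by (elim Rats_cases) (auto simp: rpoly4_def monom4_def zero_prod_def intro!: exI[of _ "{0}"])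

lemma rpoly4_monom4: "rpoly4 (monom4 m)"
  unfolding rpoly4_def by (auto intro!: exI[of _ "{m}"] exI[of _ "\<lambda>_. 1"])

lemma rpoly4_coord:
  assumes "i < 4"
  shows "rpoly4 (coord i)"
proof -
  have "i = 0 \<or> i = 1 \<or> i = 2 \<or> i = 3"
    using assms by auto
  then have "coord i = monom4 (if i = 0 then 1 else 0, if i = 1 then 1 else 0,
                                if i = 2 then 1 else 0, if i = 3 then 1 else 0)"
    by (elim disjE) (simp_all add: monom4_def fun_eq_iff)
  then show ?thesis
    by (simp add: rpoly4_monom4)
qed

lemma rpoly4_add:
  assumes "rpoly4 f" "rpoly4 g"
  shows "rpoly4 (\<lambda>p. f p + g p)"
proof -
  obtain S r where S: "finite S" and f: "f = (\<lambda>p. \<Sum>m\<in>S. real_of_rat (r m) * monom4 m p)"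
    using assms(1) unfolding rpoly4_def by blast
  obtain T s where T: "finite T" and g: "g = (\<lambda>p. \<Sum>m\<in>T. real_of_rat (s m) * monom4 m p)"
    using assms(2) unfolding rpoly4_def by blast
  define t where "t m = (if m \<in> S then r m else 0) + (if m \<in> T then s m else 0)" for m
  have "f p + g p = (\<Sum>m\<in>S \<union> T. real_of_rat (t m) * monom4 m p)" for p
    using S T by (simp add: f g t_def of_rat_add distrib_right sum.distrib
        if_distrib[of real_of_rat] if_distrib[of "\<lambda>x. x * monom4 _ p"] sum.If_cases Int_absorb1 Int_absorb2)
  then show ?thesis
    unfolding rpoly4_def using S T by (intro exI[of _ "S \<union> T"] exI[of _ t]) auto
qed

lemma rpoly4_mult:
  assumes "rpoly4 f" "rpoly4 g"
  shows "rpoly4 (\<lambda>p. f p * g p)"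
proof -
  obtain S r where S: "finite S" and f: "f = (\<lambda>p. \<Sum>m\<in>S. real_of_rat (r m) * monom4 m p)"
    using assms(1) unfolding rpoly4_def by blast
  obtain T s where T: "finite T" and g: "g = (\<lambda>p. \<Sum>m\<in>T. real_of_rat (s m) * monom4 m p)"
    using assms(2) unfolding rpoly4_def by blast
  define h where "h x = fst x + snd x" for x :: "(nat \<times> nat \<times> nat \<times> nat) \<times> (nat \<times> nat \<times> nat \<times> nat)"
  define t where "t n = (\<Sum>x | x \<in> S \<times> T \<and> h x = n. r (fst x) * s (snd x))" for n
  have fin: "finite (S \<times> T)"
    using S T by simp
  have "f p * g p = (\<Sum>n\<in>h ` (S \<times> T). real_of_rat (t n) * monom4 n p)" for p
  proof -
    have "f p * g p = (\<Sum>x\<in>S \<times> T. real_of_rat (r (fst x) * s (snd x)) * monom4 (h x) p)"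
      unfolding f g h_def sum_product sum.cartesian_product monom4_add
      by (simp add: of_rat_mult mult_ac case_prod_beta)
    also have "\<dots> = (\<Sum>n\<in>h ` (S \<times> T). \<Sum>x | x \<in> S \<times> T \<and> h x = n.
                       real_of_rat (r (fst x) * s (snd x)) * monom4 (h x) p)"
      by (rule sum.image_gen[OF fin])
    also have "\<dots> = (\<Sum>n\<in>h ` (S \<times> T). real_of_rat (t n) * monom4 n p)"
      unfolding t_def of_rat_sum sum_distrib_right by (auto intro!: sum.cong)
    finally show ?thesis .
  qed
  then show ?thesis
    unfolding rpoly4_def using fin by (intro exI[of _ "h ` (S \<times> T)"] exI[of _ t]) auto
qed

lemma rpoly4_power: "rpoly4 f \<Longrightarrow> rpoly4 (\<lambda>p. f p ^ n)"
  by (induction n) (simp_all add: rpoly4_const rpoly4_mult)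

lemma rpoly4_diff: "rpoly4 f \<Longrightarrow> rpoly4 g \<Longrightarrow> rpoly4 (\<lambda>p. f p - g p)"
  using rpoly4_add[of f "\<lambda>p. -1 * g p"] rpoly4_mult[OF rpoly4_const[of "-1"], of g] by simp

lemma coord_setc:
  "k < 4 \<Longrightarrow> i < 4 \<Longrightarrow> coord i (setc k t p) = (if i = k then t else coord i p)"
  by (cases p) (auto simp: coord_def setc_def numeral_eq_Suc less_Suc_eq)

lemma setc_coord: "setc k (coord k p) p = p"
  by (cases p) (auto simp: setc_def coord_def)

lemma bigX_eq: "bigX p = coord 0 p - coord 2 p"
  by (cases p) (simp add: bigX_def coord_def)

lemma bigY_eq: "bigY p = coord 1 p - coord 3 p"
  by (cases p) (simp add: bigY_def coord_def)

lemma rpoly4_bigX: "rpoly4 bigX"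
  using rpoly4_diff[OF rpoly4_coord[of 0] rpoly4_coord[of 2]] by (simp add: bigX_eq[abs_def])

lemma rpoly4_bigY: "rpoly4 bigY"
  using rpoly4_diff[OF rpoly4_coord[of 1] rpoly4_coord[of 3]] by (simp add: bigY_eq[abs_def])

definition H_form :: "(pt4 \<Rightarrow> real) \<Rightarrow> bool" where
  "H_form G \<longleftrightarrow> (\<exists>a b c d. rpoly4 a \<and> rpoly4 b \<and> rpoly4 c \<and> rpoly4 d \<and>
     G = (\<lambda>p. a p * ln ((bigX p)\<^sup>2 + (bigY p)\<^sup>2) + b p * arctan (bigX p / bigY p)
              + c p * arctan (bigY p / bigX p) + d p))"

lemma H_form_imp_Hfun:
  assumes "H_form G"
  obtains Q1 Q2 Q3 Q4 where "is_qpoly4 Q1" "is_qpoly4 Q2" "is_qpoly4 Q3" "is_qpoly4 Q4"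
    "G = Hfun Q1 Q2 Q3 Q4"
proof -
  obtain a b c d where "rpoly4 a" "rpoly4 b" "rpoly4 c" "rpoly4 d" and G:
    "G = (\<lambda>p. a p * ln ((bigX p)\<^sup>2 + (bigY p)\<^sup>2) + b p * arctan (bigX p / bigY p)
              + c p * arctan (bigY p / bigX p) + d p)"
    using assms unfolding H_form_def by blast
  then obtain Q1 Q2 Q3 Q4 where "is_qpoly4 Q1" "is_qpoly4 Q2" "is_qpoly4 Q3" "is_qpoly4 Q4"
    and "peval4 Q1 = a" "peval4 Q2 = b" "peval4 Q3 = c" "peval4 Q4 = d"
    by (metis rpoly4_imp_peval4)
  with G show ?thesis
    using that by (simp add: Hfun_def[abs_def])
qed

lemma H_form_add:
  assumes "H_form F" "H_form G"
  shows "H_form (\<lambda>p. F p + G p)"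
proof -
  obtain a b c d where "rpoly4 a" "rpoly4 b" "rpoly4 c" "rpoly4 d" and F:
    "F = (\<lambda>p. a p * ln ((bigX p)\<^sup>2 + (bigY p)\<^sup>2) + b p * arctan (bigX p / bigY p)
              + c p * arctan (bigY p / bigX p) + d p)"
    using assms(1) unfolding H_form_def by blast
  moreover obtain a' b' c' d' where "rpoly4 a'" "rpoly4 b'" "rpoly4 c'" "rpoly4 d'" and G:
    "G = (\<lambda>p. a' p * ln ((bigX p)\<^sup>2 + (bigY p)\<^sup>2) + b' p * arctan (bigX p / bigY p)
              + c' p * arctan (bigY p / bigX p) + d' p)"
    using assms(2) unfolding H_form_def by blast
  ultimately show ?thesis
    unfolding H_form_def
    by (intro exI[of _ "\<lambda>p. a p + a' p"] exI[of _ "\<lambda>p. b p + b' p"] exI[of _ "\<lambda>p. c p + c' p"]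
        exI[of _ "\<lambda>p. d p + d' p"]) (simp add: rpoly4_add algebra_simps)
qed

lemma H_form_mult:
  assumes "rpoly4 h" "H_form G"
  shows "H_form (\<lambda>p. h p * G p)"
proof -
  obtain a b c d where "rpoly4 a" "rpoly4 b" "rpoly4 c" "rpoly4 d" and G:
    "G = (\<lambda>p. a p * ln ((bigX p)\<^sup>2 + (bigY p)\<^sup>2) + b p * arctan (bigX p / bigY p)
              + c p * arctan (bigY p / bigX p) + d p)"
    using assms(2) unfolding H_form_def by blast
  with assms(1) show ?thesis
    unfolding H_form_def
    by (intro exI[of _ "\<lambda>p. h p * a p"] exI[of _ "\<lambda>p. h p * b p"] exI[of _ "\<lambda>p. h p * c p"]
        exI[of _ "\<lambda>p. h p * d p"]) (simp add: rpoly4_mult algebra_simps)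
qed

lemma H_form_rpoly4: "rpoly4 d \<Longrightarrow> H_form d"
  unfolding H_form_def using rpoly4_const[of 0] by (intro exI[of _ "\<lambda>p. 0"] exI[of _ d]) auto

lemma H_form_log: "H_form (\<lambda>p. ln ((bigX p)\<^sup>2 + (bigY p)\<^sup>2))"
  unfolding H_form_def using rpoly4_const[of 0] rpoly4_const[of 1]
  by (intro exI[of _ "\<lambda>p. 1"] exI[of _ "\<lambda>p. 0"]) auto

lemma H_form_arctan_XY: "H_form (\<lambda>p. arctan (bigX p / bigY p))"
  unfolding H_form_def using rpoly4_const[of 0] rpoly4_const[of 1]
  by (intro exI[of _ "\<lambda>p. 0"] exI[of _ "\<lambda>p. 1"]) auto

lemma H_form_arctan_YX: "H_form (\<lambda>p. arctan (bigY p / bigX p))"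
  unfolding H_form_def using rpoly4_const[of 0] rpoly4_const[of 1]
  by (intro exI[of _ "\<lambda>p. 0"] exI[of _ "\<lambda>p. 1"]) auto

lemma H_form_uminus_iff [simp]: "H_form (\<lambda>p. - G p) \<longleftrightarrow> H_form G"
  using H_form_mult[OF rpoly4_const[of "-1"], of "\<lambda>p. - G p"]
    H_form_mult[OF rpoly4_const[of "-1"], of G] by auto

definition coord_free :: "nat \<Rightarrow> (pt4 \<Rightarrow> real) \<Rightarrow> bool" where
  "coord_free k h \<longleftrightarrow> (\<forall>t p. h (setc k t p) = h p)"

lemma coord_freeD: "coord_free k h \<Longrightarrow> h (setc k t p) = h p"
  unfolding coord_free_def by blast

lemma coord_free_const [simp]: "coord_free k (\<lambda>p. c)"
  by (simp add: coord_free_def)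

lemma coord_free_mult: "coord_free k f \<Longrightarrow> coord_free k g \<Longrightarrow> coord_free k (\<lambda>p. f p * g p)"
  by (simp add: coord_free_def)

lemma coord_free_power: "coord_free k f \<Longrightarrow> coord_free k (\<lambda>p. f p ^ n)"
  by (simp add: coord_free_def)

lemma coord_free_coord: "k < 4 \<Longrightarrow> i < 4 \<Longrightarrow> i \<noteq> k \<Longrightarrow> coord_free k (coord i)"
  by (simp add: coord_free_def coord_setc)

definition has_partial_on_V :: "nat \<Rightarrow> (pt4 \<Rightarrow> real) \<Rightarrow> (pt4 \<Rightarrow> real) \<Rightarrow> bool" where
  "has_partial_on_V k G f \<longleftrightarrow>
     (\<forall>p\<in>setV. ((\<lambda>t. G (setc k t p)) has_real_derivative f p) (at (coord k p)))"

lemma has_partial_on_V_add: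
  "has_partial_on_V k F f \<Longrightarrow> has_partial_on_V k G g \<Longrightarrow>
   has_partial_on_V k (\<lambda>p. F p + G p) (\<lambda>p. f p + g p)"
  unfolding has_partial_on_V_def by (auto intro!: DERIV_add)

lemma has_partial_on_V_mult:
  assumes "has_partial_on_V k F f" "has_partial_on_V k G g"
  shows "has_partial_on_V k (\<lambda>p. F p * G p) (\<lambda>p. f p * G p + F p * g p)"
  unfolding has_partial_on_V_def
proof
  fix p assume "p \<in> setV"
  then have "((\<lambda>t. F (setc k t p) * G (setc k t p)) has_real_derivative
      f p * G (setc k (coord k p) p) + g p * F (setc k (coord k p) p)) (at (coord k p))"
    using assms by (intro DERIV_mult) (auto simp: has_partial_on_V_def)
  then show "((\<lambda>t. F (setc k t p) * G (setc k t p)) has_real_derivative f p * G p + F p * g p)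
      (at (coord k p))"
    by (simp add: setc_coord mult.commute)
qed

lemma has_partial_on_V_coord_free: "coord_free k h \<Longrightarrow> has_partial_on_V k h (\<lambda>p. 0)"
  by (auto simp: has_partial_on_V_def coord_free_def simp del: split_paired_All)

lemma has_partial_on_V_cong:
  "has_partial_on_V k G f \<Longrightarrow> (\<And>p. p \<in> setV \<Longrightarrow> f p = g p) \<Longrightarrow> has_partial_on_V k G g"
  by (simp add: has_partial_on_V_def)

definition H_primitive :: "nat \<Rightarrow> (pt4 \<Rightarrow> real) \<Rightarrow> bool" where
  "H_primitive k f \<longleftrightarrow> (\<exists>G. H_form G \<and> has_partial_on_V k G f)"

lemma H_primitiveI: "H_form G \<Longrightarrow> has_partial_on_V k G f \<Longrightarrow> H_primitive k f"
  unfolding H_primitive_def by blast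

lemma H_primitive_cong:
  "H_primitive k f \<Longrightarrow> (\<And>p. p \<in> setV \<Longrightarrow> f p = g p) \<Longrightarrow> H_primitive k g"
  unfolding H_primitive_def using has_partial_on_V_cong by blast

lemma H_primitive_add: "H_primitive k f \<Longrightarrow> H_primitive k g \<Longrightarrow> H_primitive k (\<lambda>p. f p + g p)"
  unfolding H_primitive_def using H_form_add has_partial_on_V_add by blast

lemma H_primitive_mult:
  assumes "rpoly4 h" "coord_free k h" "H_primitive k f"
  shows "H_primitive k (\<lambda>p. h p * f p)"
proof -
  obtain G where "H_form G" "has_partial_on_V k G f"
    using assms(3) unfolding H_primitive_def by blast
  then have "has_partial_on_V k (\<lambda>p. h p * G p) (\<lambda>p. 0 * G p + h p * f p)"
    by (intro has_partial_on_V_mult has_partial_on_V_coord_free assms(2))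
  with \<open>H_form G\<close> assms(1) show ?thesis
    by (intro H_primitiveI[OF H_form_mult]) (auto elim: has_partial_on_V_cong)
qed

lemma H_primitive_const_mult: "c \<in> \<rat> \<Longrightarrow> H_primitive k f \<Longrightarrow> H_primitive k (\<lambda>p. c * f p)"
  by (rule H_primitive_mult[OF rpoly4_const coord_free_const])

lemma H_primitive_zero: "H_primitive k (\<lambda>p. 0)"
  using H_primitiveI[OF H_form_rpoly4[OF rpoly4_const] has_partial_on_V_coord_free, of 0 k] by simp

lemma H_primitive_uminus_iff [simp]: "H_primitive k (\<lambda>p. - f p) \<longleftrightarrow> H_primitive k f"
  using H_primitive_const_mult[of "-1" k "\<lambda>p. - f p"] H_primitive_const_mult[of "-1" k f] by auto

lemma H_primitive_sum:
  "finite A \<Longrightarrow> (\<And>i. i \<in> A \<Longrightarrow> H_primitive k (f i)) \<Longrightarrow> H_primitive k (\<lambda>p. \<Sum>i\<in>A. f i p)"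
proof (induction A rule: finite_induct)
  case empty
  show ?case
    using H_primitive_zero by simp
next
  case (insert i A)
  then show ?case
    by (simp add: H_primitive_add)
qed

lemma H_primitive_cancel:
  assumes "H_primitive k (\<lambda>p. c * f p + g p)" "H_primitive k g" "c \<in> \<rat>" "c \<noteq> 0"
  shows "H_primitive k f"
proof -
  have "H_primitive k (\<lambda>p. inverse c * ((c * f p + g p) + -1 * g p))"
    using assms by (intro H_primitive_const_mult H_primitive_add[OF assms(1)]) simp_all
  then show ?thesis
    by (rule H_primitive_cong) (simp add: \<open>c \<noteq> 0\<close> field_simps)
qed

lemma monom4_split_coord:
  assumes "k < 4"
  obtains j h where "rpoly4 h" "coord_free k h" "\<And>p. monom4 m p = coord k p ^ j * h p"
proof -
  obtain a b c d where m: "m = (a, b, c, d)"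
    by (cases m)
  have "k = 0 \<or> k = 1 \<or> k = 2 \<or> k = 3"
    using assms by auto
  then show ?thesis
  proof (elim disjE)
    assume "k = 0"
    then show ?thesis
      by (intro that[of "\<lambda>p. coord 1 p ^ b * coord 2 p ^ c * coord 3 p ^ d" a])
        (auto simp: m monom4_def mult_ac intro!: rpoly4_mult rpoly4_power rpoly4_coord
          coord_free_mult coord_free_power coord_free_coord)
  next
    assume "k = 1"
    then show ?thesis
      by (intro that[of "\<lambda>p. coord 0 p ^ a * coord 2 p ^ c * coord 3 p ^ d" b])
        (auto simp: m monom4_def mult_ac intro!: rpoly4_mult rpoly4_power rpoly4_coord
          coord_free_mult coord_free_power coord_free_coord)
  next
    assume "k = 2"
    then show ?thesis
      by (intro that[of "\<lambda>p. coord 0 p ^ a * coord 1 p ^ b * coord 3 p ^ d" c])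
        (auto simp: m monom4_def mult_ac intro!: rpoly4_mult rpoly4_power rpoly4_coord
          coord_free_mult coord_free_power coord_free_coord)
  next
    assume "k = 3"
    then show ?thesis
      by (intro that[of "\<lambda>p. coord 0 p ^ a * coord 1 p ^ b * coord 2 p ^ c" d])
        (auto simp: m monom4_def mult_ac intro!: rpoly4_mult rpoly4_power rpoly4_coord
          coord_free_mult coord_free_power coord_free_coord)
  qed
qed

lemma has_real_derivative_ln_sum_squares:
  "(w::real) \<noteq> 0 \<Longrightarrow> ((\<lambda>x. ln (x\<^sup>2 + w\<^sup>2)) has_real_derivative 2 * u / (u\<^sup>2 + w\<^sup>2)) (at u)"
  by (auto intro!: derivative_eq_intros simp: sum_power2_gt_zero_iff field_simps)

lemma has_real_derivative_arctan_div_left: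
  "(w::real) \<noteq> 0 \<Longrightarrow> ((\<lambda>x. arctan (x / w)) has_real_derivative w / (u\<^sup>2 + w\<^sup>2)) (at u)"
  by (auto intro!: derivative_eq_intros simp: field_simps power2_eq_square)

lemma has_real_derivative_arctan_div_right:
  "(u::real) \<noteq> 0 \<Longrightarrow> ((\<lambda>x. arctan (w / x)) has_real_derivative - w / (u\<^sup>2 + w\<^sup>2)) (at u)"
  by (auto intro!: derivative_eq_intros simp: field_simps power2_eq_square)

locale coord_frame =
  fixes k :: nat and U W Z :: "pt4 \<Rightarrow> real"
  assumes k_less_4: "k < 4"
    and coord_eq: "\<And>p. coord k p = U p + Z p"
    and rpoly4_W: "rpoly4 W" and rpoly4_Z: "rpoly4 Z"
    and coord_free_W: "coord_free k W" and coord_free_Z: "coord_free k Z"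
    and nonzero_on_V: "\<And>p. p \<in> setV \<Longrightarrow> U p \<noteq> 0 \<and> W p \<noteq> 0"
    and H_form_log: "H_form (\<lambda>p. ln ((U p)\<^sup>2 + (W p)\<^sup>2))"
    and H_form_arctan_UW: "H_form (\<lambda>p. arctan (U p / W p))"
    and H_form_arctan_WU: "H_form (\<lambda>p. arctan (W p / U p))"
begin

lemma rpoly4_U: "rpoly4 U"
proof -
  have "U = (\<lambda>p. coord k p - Z p)"
    by (simp add: coord_eq fun_eq_iff)
  then show ?thesis
    using rpoly4_diff[OF rpoly4_coord[OF k_less_4] rpoly4_Z] by simp
qed

lemma U_setc: "U (setc k t p) = t - Z p"
  using coord_eq[of "setc k t p"] coord_freeD[OF coord_free_Z] k_less_4 by (simp add: coord_setc)

lemma has_partial_on_V_comp: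
  assumes "\<And>u w. u \<noteq> 0 \<Longrightarrow> w \<noteq> 0 \<Longrightarrow> ((\<lambda>x. g x w) has_real_derivative g' u w) (at u)"
  shows "has_partial_on_V k (\<lambda>p. g (U p) (W p)) (\<lambda>p. g' (U p) (W p))"
  unfolding has_partial_on_V_def
proof
  fix p assume "p \<in> setV"
  then have "((\<lambda>x. g x (W p)) has_real_derivative g' (U p) (W p)) (at (coord k p + - Z p))"
    using assms nonzero_on_V by (simp add: coord_eq)
  then have "((\<lambda>t. g (t + - Z p) (W p)) has_real_derivative g' (U p) (W p)) (at (coord k p))"
    unfolding DERIV_shift .
  moreover have "(\<lambda>t. g (U (setc k t p)) (W (setc k t p))) = (\<lambda>t. g (t + - Z p) (W p))"
    by (simp add: U_setc coord_freeD[OF coord_free_W])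
  ultimately show "((\<lambda>t. g (U (setc k t p)) (W (setc k t p))) has_real_derivative g' (U p) (W p))
      (at (coord k p))"
    by simp
qed

lemma has_partial_on_V_U_power:
  "has_partial_on_V k (\<lambda>p. U p ^ Suc n) (\<lambda>p. real (Suc n) * U p ^ n)"
  by (rule has_partial_on_V_comp[of "\<lambda>u w. u ^ Suc n" "\<lambda>u w. real (Suc n) * u ^ n"])
    (use DERIV_pow[of "Suc n"] in simp)

lemma has_partial_on_V_log:
  "has_partial_on_V k (\<lambda>p. ln ((U p)\<^sup>2 + (W p)\<^sup>2)) (\<lambda>p. 2 * U p / ((U p)\<^sup>2 + (W p)\<^sup>2))"
  by (rule has_partial_on_V_comp[of "\<lambda>u w. ln (u\<^sup>2 + w\<^sup>2)" "\<lambda>u w. 2 * u / (u\<^sup>2 + w\<^sup>2)"])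
    (rule has_real_derivative_ln_sum_squares)

lemma has_partial_on_V_arctan_UW:
  "has_partial_on_V k (\<lambda>p. arctan (U p / W p)) (\<lambda>p. W p / ((U p)\<^sup>2 + (W p)\<^sup>2))"
  by (rule has_partial_on_V_comp[of "\<lambda>u w. arctan (u / w)" "\<lambda>u w. w / (u\<^sup>2 + w\<^sup>2)"])
    (rule has_real_derivative_arctan_div_left)

lemma has_partial_on_V_arctan_WU:
  "has_partial_on_V k (\<lambda>p. arctan (W p / U p)) (\<lambda>p. - W p / ((U p)\<^sup>2 + (W p)\<^sup>2))"
  by (rule has_partial_on_V_comp[of "\<lambda>u w. arctan (w / u)" "\<lambda>u w. - w / (u\<^sup>2 + w\<^sup>2)"])
    (rule has_real_derivative_arctan_div_right)

abbreviation R :: "pt4 \<Rightarrow> real" where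
  "R p \<equiv> (U p)\<^sup>2 + (W p)\<^sup>2"

lemma R_nonzero: "p \<in> setV \<Longrightarrow> R p \<noteq> 0"
  using nonzero_on_V by (simp add: sum_power2_eq_zero_iff)

lemma H_primitive_U_power: "H_primitive k (\<lambda>p. U p ^ n)"
proof (rule H_primitive_cancel[where c = "real (Suc n)" and g = "\<lambda>p. 0"])
  show "H_primitive k (\<lambda>p. real (Suc n) * U p ^ n + 0)"
    using H_primitiveI[OF H_form_rpoly4[OF rpoly4_power[OF rpoly4_U]] has_partial_on_V_U_power]
    by simp
qed (simp_all add: H_primitive_zero)

lemma H_primitive_quotients:
  "H_primitive k (\<lambda>p. W p * U p ^ m / R p) \<and> H_primitive k (\<lambda>p. U p ^ Suc m / R p)"
proof (induction m)
  case 0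
  have "H_primitive k (\<lambda>p. W p / R p)"
    by (rule H_primitiveI[OF H_form_arctan_UW has_partial_on_V_arctan_UW])
  moreover have "H_primitive k (\<lambda>p. U p / R p)"
  proof (rule H_primitive_cancel[where c = 2 and g = "\<lambda>p. 0"])
    show "H_primitive k (\<lambda>p. 2 * (U p / R p) + 0)"
      using H_primitiveI[OF H_form_log has_partial_on_V_log] by simp
  qed (simp_all add: H_primitive_zero)
  ultimately show ?case
    by simp
next
  case (Suc m)
  have "H_primitive k (\<lambda>p. W p * (U p ^ Suc m / R p))"
    using Suc.IH by (intro H_primitive_mult rpoly4_W coord_free_W) simp
  moreover have "H_primitive k (\<lambda>p. U p ^ m + -1 * (W p * (W p * U p ^ m / R p)))"
    using Suc.IH
    by (intro H_primitive_add H_primitive_U_power H_primitive_const_mult H_primitive_mult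
        rpoly4_W coord_free_W) simp_all
  moreover have "U p ^ Suc (Suc m) / R p = U p ^ m + -1 * (W p * (W p * U p ^ m / R p))"
    if "p \<in> setV" for p
    using R_nonzero[OF that] by (simp add: field_simps power2_eq_square)
  ultimately show ?case
    by (auto elim: H_primitive_cong)
qed

lemma H_primitive_U_power_log: "H_primitive k (\<lambda>p. U p ^ n * ln (R p))"
proof (rule H_primitive_cancel[where c = "real (Suc n)" and g = "\<lambda>p. 2 * (U p ^ Suc (Suc n) / R p)"])
  have "has_partial_on_V k (\<lambda>p. U p ^ Suc n * ln (R p))
      (\<lambda>p. real (Suc n) * U p ^ n * ln (R p) + U p ^ Suc n * (2 * U p / R p))"
    by (rule has_partial_on_V_mult[OF has_partial_on_V_U_power has_partial_on_V_log])
  then show "H_primitive k (\<lambda>p. real (Suc n) * (U p ^ n * ln (R p)) + 2 * (U p ^ Suc (Suc n) / R p))"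
    by (intro H_primitiveI[OF H_form_mult[OF rpoly4_power[OF rpoly4_U] H_form_log]])
      (erule has_partial_on_V_cong, simp add: algebra_simps)
  show "H_primitive k (\<lambda>p. 2 * (U p ^ Suc (Suc n) / R p))"
    using H_primitive_quotients[of "Suc n"] by (intro H_primitive_const_mult) simp_all
qed simp_all

lemma H_primitive_U_power_arctan_UW: "H_primitive k (\<lambda>p. U p ^ n * arctan (U p / W p))"
proof (rule H_primitive_cancel[where c = "real (Suc n)" and g = "\<lambda>p. W p * U p ^ Suc n / R p"])
  have "has_partial_on_V k (\<lambda>p. U p ^ Suc n * arctan (U p / W p))
      (\<lambda>p. real (Suc n) * U p ^ n * arctan (U p / W p) + U p ^ Suc n * (W p / R p))"
    by (rule has_partial_on_V_mult[OF has_partial_on_V_U_power has_partial_on_V_arctan_UW])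
  then show "H_primitive k (\<lambda>p. real (Suc n) * (U p ^ n * arctan (U p / W p)) + W p * U p ^ Suc n / R p)"
    by (intro H_primitiveI[OF H_form_mult[OF rpoly4_power[OF rpoly4_U] H_form_arctan_UW]])
      (erule has_partial_on_V_cong, simp add: algebra_simps)
  show "H_primitive k (\<lambda>p. W p * U p ^ Suc n / R p)"
    using H_primitive_quotients[of "Suc n"] by blast
qed simp_all

lemma H_primitive_U_power_arctan_WU: "H_primitive k (\<lambda>p. U p ^ n * arctan (W p / U p))"
proof (rule H_primitive_cancel[where c = "real (Suc n)" and g = "\<lambda>p. -1 * (W p * U p ^ Suc n / R p)"])
  have "has_partial_on_V k (\<lambda>p. U p ^ Suc n * arctan (W p / U p))
      (\<lambda>p. real (Suc n) * U p ^ n * arctan (W p / U p) + U p ^ Suc n * (- W p / R p))"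
    by (rule has_partial_on_V_mult[OF has_partial_on_V_U_power has_partial_on_V_arctan_WU])
  then show "H_primitive k (\<lambda>p. real (Suc n) * (U p ^ n * arctan (W p / U p))
      + -1 * (W p * U p ^ Suc n / R p))"
    by (intro H_primitiveI[OF H_form_mult[OF rpoly4_power[OF rpoly4_U] H_form_arctan_WU]])
      (erule has_partial_on_V_cong, simp add: algebra_simps)
  show "H_primitive k (\<lambda>p. -1 * (W p * U p ^ Suc n / R p))"
    using H_primitive_quotients[of "Suc n"] by (intro H_primitive_const_mult) simp_all
qed simp_all

lemma H_primitive_monom4_mult:
  assumes "\<And>i. H_primitive k (\<lambda>p. U p ^ i * F p)"
  shows "H_primitive k (\<lambda>p. monom4 m p * F p)"
proof -
  obtain j h where h: "rpoly4 h" "coord_free k h" and monom: "\<And>p. monom4 m p = coord k p ^ j * h p"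
    using monom4_split_coord[OF k_less_4, where m = m] by blast
  have "H_primitive k (\<lambda>p. \<Sum>i\<le>j. (real (j choose i) * Z p ^ (j - i) * h p) * (U p ^ i * F p))"
    using h by (intro H_primitive_sum H_primitive_mult assms rpoly4_mult rpoly4_const rpoly4_power
        rpoly4_Z coord_free_mult coord_free_power coord_free_Z coord_free_const) simp_all
  moreover have "monom4 m p * F p = (\<Sum>i\<le>j. (real (j choose i) * Z p ^ (j - i) * h p) * (U p ^ i * F p))"
    for p
    unfolding monom coord_eq binomial_ring sum_distrib_right by (rule sum.cong) (simp_all add: mult_ac)
  ultimately show ?thesis
    by simp
qed

lemma H_primitive_monom4_mult_basis:
  "H_primitive k (\<lambda>p. monom4 m p * ln (R p))"
  "H_primitive k (\<lambda>p. monom4 m p * arctan (U p / W p))"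
  "H_primitive k (\<lambda>p. monom4 m p * arctan (W p / U p))"
  "H_primitive k (monom4 m)"
  using H_primitive_monom4_mult[OF H_primitive_U_power_log]
    H_primitive_monom4_mult[OF H_primitive_U_power_arctan_UW]
    H_primitive_monom4_mult[OF H_primitive_U_power_arctan_WU]
    H_primitive_monom4_mult[of "\<lambda>p. 1"] H_primitive_U_power
  by simp_all

end

lemma coord_free_bigX: "k = 1 \<or> k = 3 \<Longrightarrow> coord_free k bigX"
  by (auto simp: coord_free_def bigX_eq coord_setc)

lemma coord_free_bigY: "k = 0 \<or> k = 2 \<Longrightarrow> coord_free k bigY"
  by (auto simp: coord_free_def bigY_eq coord_setc)

lemma H_primitive_monom4_mult_Hfun_basis:
  assumes "k < 4"
    and "F \<in> {\<lambda>p. ln ((bigX p)\<^sup>2 + (bigY p)\<^sup>2), \<lambda>p. arctan (bigX p / bigY p),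
              \<lambda>p. arctan (bigY p / bigX p), \<lambda>p. 1}"
  shows "H_primitive k (\<lambda>p. monom4 m p * F p)"
proof -
  have log_swap: "ln ((bigY p)\<^sup>2 + (bigX p)\<^sup>2) = ln ((bigX p)\<^sup>2 + (bigY p)\<^sup>2)" for p
    by (simp add: add.commute)
  note frame_simps = setV_def log_swap rpoly4_bigX rpoly4_bigY rpoly4_coord coord_free_coord
    coord_free_bigX coord_free_bigY H_form_log H_form_arctan_XY H_form_arctan_YX arctan_minus
  have "k = 0 \<or> k = 1 \<or> k = 2 \<or> k = 3"
    using assms(1) by auto
  then show ?thesis
  proof (elim disjE)
    assume "k = 0"
    interpret coord_frame 0 bigX bigY "coord 2"
      by unfold_locales (simp_all add: frame_simps, simp_all add: bigX_eq bigY_eq)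
    show ?thesis
      using assms(2) H_primitive_monom4_mult_basis[of m] by (auto simp: \<open>k = 0\<close>)
  next
    assume "k = 1"
    interpret coord_frame 1 bigY bigX "coord 3"
      by unfold_locales (simp_all add: frame_simps, simp_all add: bigX_eq bigY_eq)
    show ?thesis
      using assms(2) H_primitive_monom4_mult_basis[of m] by (auto simp: \<open>k = 1\<close> log_swap)
  next
    assume "k = 2"
    interpret coord_frame 2 "\<lambda>p. - bigX p" bigY "coord 0"
      by unfold_locales (simp_all add: frame_simps, simp_all add: bigX_eq bigY_eq)
    show ?thesis
      using assms(2) H_primitive_monom4_mult_basis[of m] by (auto simp: \<open>k = 2\<close> arctan_minus)
  next
    assume "k = 3"
    interpret coord_frame 3 "\<lambda>p. - bigY p" bigX "coord 1"
      by unfold_locales (simp_all add: frame_simps, simp_all add: bigX_eq bigY_eq)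
    show ?thesis
      using assms(2) H_primitive_monom4_mult_basis[of m] by (auto simp: \<open>k = 3\<close> arctan_minus log_swap)
  qed
qed

lemma H_primitive_peval4_mult:
  assumes "is_qpoly4 P" "\<And>m. H_primitive k (\<lambda>p. monom4 m p * F p)"
  shows "H_primitive k (\<lambda>p. peval4 P p * F p)"
proof -
  have "H_primitive k (\<lambda>p. \<Sum>m | P m \<noteq> 0. real_of_rat (P m) * (monom4 m p * F p))"
    using assms unfolding is_qpoly4_def by (intro H_primitive_sum H_primitive_const_mult) simp_all
  then show ?thesis
    by (simp add: peval4_eq_sum_monom4 sum_distrib_right mult.assoc)
qed

theorem mainTheorem7:
  fixes P1 P2 P3 P4 :: qpoly4 and k :: nat
  assumes "is_qpoly4 P1" "is_qpoly4 P2" "is_qpoly4 P3" "is_qpoly4 P4"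
    and "k < 4"
  shows "\<exists>Q1 Q2 Q3 Q4. is_qpoly4 Q1 \<and> is_qpoly4 Q2 \<and> is_qpoly4 Q3 \<and> is_qpoly4 Q4 \<and>
     (\<forall>p\<in>setV. ((\<lambda>t. Hfun Q1 Q2 Q3 Q4 (setc k t p)) has_real_derivative
                    Hfun P1 P2 P3 P4 p) (at (coord k p)))"
proof -
  note basis = H_primitive_monom4_mult_Hfun_basis[OF assms(5)]
  have "H_primitive k (\<lambda>p. peval4 P1 p * ln ((bigX p)\<^sup>2 + (bigY p)\<^sup>2)
      + peval4 P2 p * arctan (bigX p / bigY p) + peval4 P3 p * arctan (bigY p / bigX p)
      + peval4 P4 p * 1)"
    using assms(1-4) by (intro H_primitive_add H_primitive_peval4_mult basis) auto
  then have "H_primitive k (Hfun P1 P2 P3 P4)"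
    by (simp add: Hfun_def[abs_def])
  then obtain G where "H_form G" and G: "has_partial_on_V k G (Hfun P1 P2 P3 P4)"
    unfolding H_primitive_def by blast
  obtain Q1 Q2 Q3 Q4 where "is_qpoly4 Q1" "is_qpoly4 Q2" "is_qpoly4 Q3" "is_qpoly4 Q4"
    and "G = Hfun Q1 Q2 Q3 Q4"
    by (rule H_form_imp_Hfun[OF \<open>H_form G\<close>])
  with G show ?thesis
    unfolding has_partial_on_V_def by blast
qed

end
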